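(* Let $k\ge 1$ and let $L=(l_1,\ldots,l_k)$ be a sequence of positive integers in spider order, and let $S=S(L)$ be the spider defined by $L$. Let $t$ be an integer with $1\le t\le \alpha(S)$. Then for each $1\le i<j\le k$ we have $$|\mathcal{I}^t_{v_{i,l_i}}(S)|\ge |\mathcal{I}^t_{v_{j,l_j}}(S)|.$$
   Context: For a graph $G$, $\alpha(G)$ is the maximum size of an independent set in $G$, and for an integer $t\le\alpha(G)$, $\mathcal{I}^t(G)$ denotes the family of all independent sets of $G$ of size $t$. For a vertex $x$, $\mathcal{I}^t_x(G)$ denotes the subfamily of sets in $\mathcal{I}^t(G)$ containing $x$ (the star centered at $x$). Given a sequence of positive integers $L=(l_1,\ldots,l_k)$, the spider $S(L)$ is the tree consisting of a head vertex $v_0$ and, for each $1\le i\le k$, a leg which is the path $v_0,v_{i,1},v_{i,2},\ldots,v_{i,l_i}$; distinct legs share only $v_0$. The sequence $L$ is in spider order if: (1) whenever $l_i$ and $l_j$ are both odd and $l_i<l_j$, then $i<j$; (2) whenever $l_i$ and $l_j$ are both even and $l_i<l_j$, then $i>j$; (3) whenever $l_i$ is odd and $l_j$ is even, then $i<j$. *)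

theory Defs
  imports Main
begin

definition indep_set :: "'a set \<Rightarrow> ('a \<Rightarrow> 'a \<Rightarrow> bool) \<Rightarrow> 'a set \<Rightarrow> bool" where
  "indep_set V E I \<longleftrightarrow> I \<subseteq> V \<and> (\<forall>x\<in>I. \<forall>y\<in>I. \<not> E x y)"

definition indep_number :: "'a set \<Rightarrow> ('a \<Rightarrow> 'a \<Rightarrow> bool) \<Rightarrow> nat" where
  "indep_number V E = Max {card I | I. indep_set V E I}"

definition indep_sets_of_size :: "'a set \<Rightarrow> ('a \<Rightarrow> 'a \<Rightarrow> bool) \<Rightarrow> nat \<Rightarrow> 'a set set" where
  "indep_sets_of_size V E t = {I. indep_set V E I \<and> card I = t}"

definition indep_star :: "'a set \<Rightarrow> ('a \<Rightarrow> 'a \<Rightarrow> bool) \<Rightarrow> nat \<Rightarrow> 'a \<Rightarrow> 'a set set" where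
  "indep_star V E t x = {I \<in> indep_sets_of_size V E t. x \<in> I}"

(* Spider S(L), L = [l_1,...,l_k] (list index i-1 holds l_i).
   Head v_0 = (0,0); leg vertex v_{i,j} = (i,j) for 1 <= i <= k, 1 <= j <= l_i. *)
definition spider_verts :: "nat list \<Rightarrow> (nat \<times> nat) set" where
  "spider_verts L = {(0,0)} \<union> {(i,j). 1 \<le> i \<and> i \<le> length L \<and> 1 \<le> j \<and> j \<le> L ! (i-1)}"

definition spider_adj :: "nat list \<Rightarrow> nat \<times> nat \<Rightarrow> nat \<times> nat \<Rightarrow> bool" where
  "spider_adj L u v \<longleftrightarrow> u \<in> spider_verts L \<and> v \<in> spider_verts L \<and>
     ((u = (0,0) \<and> fst v \<ge> 1 \<and> snd v = 1) \<or>
      (v = (0,0) \<and> fst u \<ge> 1 \<and> snd u = 1) \<or>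
      (fst u \<ge> 1 \<and> fst u = fst v \<and> (snd v = snd u + 1 \<or> snd u = snd v + 1)))"

definition spider_order :: "nat list \<Rightarrow> bool" where
  "spider_order L \<longleftrightarrow> (\<forall>i j. 1 \<le> i \<and> i \<le> length L \<and> 1 \<le> j \<and> j \<le> length L \<longrightarrow>
      (odd (L!(i-1)) \<and> odd (L!(j-1)) \<and> L!(i-1) < L!(j-1) \<longrightarrow> i < j) \<and>
      (even (L!(i-1)) \<and> even (L!(j-1)) \<and> L!(i-1) < L!(j-1) \<longrightarrow> i > j) \<and>
      (odd (L!(i-1)) \<and> even (L!(j-1)) \<longrightarrow> i < j))"

end

theory Submission
  imports Defs "HOL-Computational_Algebra.Polynomial"
begin

text \<open>
  Put x = v_{i,l_i}, y = v_{j,l_j}, p = l_i and q = l_j. Legs i and j together with the head form an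
  induced path x = u_1, ..., u_{p+1} = v_0, ..., u_{p+q+1} = y which meets the rest R of the spider
  only through v_0. Count independent sets by the polynomial in X whose coefficient of X^t is the
  number of sets of size t. Splitting a set into its traces on the path and on R gives, for a vertex
  z of the path, star(z) = path(z) * indep(R) - path(z, v_0) * K, where K counts the independent sets
  of R meeting the neighbourhood of v_0. Both ends lie in equally many independent sets of the path, so
  star(x) - star(y) = X^2 (F_{p+1} F_{q-1} - F_{p-1} F_{q+1}) K, with F the Fibonacci polynomials
  counting independent sets of paths. By a d'Ocagne-type identity the bracket is a monomial times
  some F, hence has nonnegative coefficients, whenever p is odd and p \<le> q or q is even and q \<le> p;
  spider order guarantees this for i < j.
\<close>

section \<open>Size-generating polynomials of set families\<close>

definition size_poly :: "'a set set \<Rightarrow> int poly" where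
  "size_poly S = (\<Sum>A\<in>S. monom 1 (card A))"

definition nonneg_poly :: "int poly \<Rightarrow> bool" where
  "nonneg_poly P \<longleftrightarrow> (\<forall>i. 0 \<le> coeff P i)"

definition set_join :: "'a set set \<Rightarrow> 'a set set \<Rightarrow> 'a set set" where
  "set_join S T = {A \<union> B | A B. A \<in> S \<and> B \<in> T}"

lemma coeff_size_poly: "finite S \<Longrightarrow> coeff (size_poly S) t = int (card {A\<in>S. card A = t})"
  unfolding size_poly_def by (simp add: coeff_sum sum.If_cases Int_def)

lemma nonneg_poly_add: "nonneg_poly P \<Longrightarrow> nonneg_poly Q \<Longrightarrow> nonneg_poly (P + Q)"
  by (simp add: nonneg_poly_def)

lemma nonneg_poly_mult: "nonneg_poly P \<Longrightarrow> nonneg_poly Q \<Longrightarrow> nonneg_poly (P * Q)"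
  unfolding nonneg_poly_def by (auto simp: coeff_mult intro!: sum_nonneg)

lemma nonneg_poly_size_poly: "nonneg_poly (size_poly S)"
  unfolding nonneg_poly_def size_poly_def by (auto simp: coeff_sum intro!: sum_nonneg)

lemma nonneg_poly_monom: "0 \<le> c \<Longrightarrow> nonneg_poly (monom c k)"
  unfolding nonneg_poly_def by simp

lemma size_poly_empty [simp]: "size_poly {} = 0"
  by (simp add: size_poly_def)

lemma size_poly_singleton [simp]: "size_poly {A} = monom 1 (card A)"
  by (simp add: size_poly_def)

lemma size_poly_Un_disjoint:
  "finite S \<Longrightarrow> finite T \<Longrightarrow> S \<inter> T = {} \<Longrightarrow> size_poly (S \<union> T) = size_poly S + size_poly T"
  unfolding size_poly_def by (rule sum.union_disjoint)

lemma size_poly_diff: "finite S \<Longrightarrow> T \<subseteq> S \<Longrightarrow> size_poly (S - T) = size_poly S - size_poly T"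
  unfolding size_poly_def by (simp add: sum_diff finite_subset)

lemma size_poly_image:
  assumes "inj_on f X" "S \<subseteq> Pow X"
  shows "size_poly (image f ` S) = size_poly S"
proof -
  have "inj_on (image f) S"
    using inj_on_image_eq_iff[OF assms(1)] assms(2) by (intro inj_onI) blast
  then show ?thesis
    using assms unfolding size_poly_def
    by (auto simp: sum.reindex card_image inj_on_subset intro!: sum.cong)
qed

lemma set_join_iff: "J \<in> set_join S T \<longleftrightarrow> (\<exists>A\<in>S. \<exists>B\<in>T. J = A \<union> B)"
  by (auto simp: set_join_def)

lemma set_joinI: "A \<in> S \<Longrightarrow> B \<in> T \<Longrightarrow> A \<union> B \<in> set_join S T"
  by (auto simp: set_join_def)

lemma set_join_eq_image: "set_join S T = (\<lambda>(A, B). A \<union> B) ` (S \<times> T)"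
  by (auto simp: set_join_def)

lemma finite_set_join: "finite S \<Longrightarrow> finite T \<Longrightarrow> finite (set_join S T)"
  by (simp add: set_join_eq_image)

lemma size_poly_set_join:
  assumes "finite X" "finite Y" "X \<inter> Y = {}" "S \<subseteq> Pow X" "T \<subseteq> Pow Y"
  shows "size_poly (set_join S T) = size_poly S * size_poly T"
proof -
  have card_Un: "card (A \<union> B) = card A + card B" if "A \<in> S" "B \<in> T" for A B
  proof (rule card_Un_disjoint)
    show "finite A" "finite B"
      using that assms(1,2,4,5) by (meson PowD finite_subset subsetD)+
    show "A \<inter> B = {}"
      using that assms(3-5) by blast
  qed
  have "inj_on (\<lambda>(A, B). A \<union> B) (S \<times> T)"
  proof (rule inj_onI, clarify)
    fix A B A' B' assume "A \<in> S" "B \<in> T" "A' \<in> S" "B' \<in> T" and eq: "A \<union> B = A' \<union> B'"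
    then have "A \<subseteq> X" "B \<subseteq> Y" "A' \<subseteq> X" "B' \<subseteq> Y"
      using assms(4,5) by auto
    with assms(3) eq show "A = A' \<and> B = B'"
      by blast
  qed
  then have "size_poly (set_join S T) = (\<Sum>(A, B)\<in>S \<times> T. monom 1 (card (A \<union> B)))"
    unfolding size_poly_def set_join_eq_image by (simp add: sum.reindex case_prod_unfold)
  also have "\<dots> = (\<Sum>(A, B)\<in>S \<times> T. monom 1 (card A) * monom 1 (card B))"
    by (rule sum.cong) (auto simp: card_Un mult_monom)
  also have "\<dots> = size_poly S * size_poly T"
    unfolding size_poly_def sum_product sum.cartesian_product ..
  finally show ?thesis .
qed

section \<open>Independent sets of paths and Fibonacci polynomials\<close>

definition no_consec :: "nat set \<Rightarrow> bool" where
  "no_consec J \<longleftrightarrow> (\<forall>k\<in>J. Suc k \<notin> J)"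

definition path_indep :: "nat \<Rightarrow> nat \<Rightarrow> nat set set" where
  "path_indep lo hi = {J. J \<subseteq> {lo..<hi} \<and> no_consec J}"

text \<open>\<open>fib_poly (m + 2)\<close> is the independence polynomial of a path with \<open>m\<close> vertices.\<close>

fun fib_poly :: "nat \<Rightarrow> int poly" where
  "fib_poly 0 = 0"
| "fib_poly (Suc 0) = 1"
| "fib_poly (Suc (Suc k)) = fib_poly (Suc k) + monom 1 1 * fib_poly k"

lemma finite_path_indep [simp]: "finite (path_indep lo hi)"
  by (rule finite_subset[of _ "Pow {lo..<hi}"]) (auto simp: path_indep_def)

lemma path_indep_empty: "hi \<le> lo \<Longrightarrow> path_indep lo hi = {{}}"
  by (auto simp: path_indep_def no_consec_def)

lemma path_indep_Suc_Suc:
  assumes "lo \<le> h"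
  shows "path_indep lo (Suc (Suc h)) = path_indep lo (Suc h) \<union> set_join (path_indep lo h) {{Suc h}}"
proof (intro set_eqI iffI)
  fix J assume J: "J \<in> path_indep lo (Suc (Suc h))"
  show "J \<in> path_indep lo (Suc h) \<union> set_join (path_indep lo h) {{Suc h}}"
  proof (cases "Suc h \<in> J")
    case False
    with J show ?thesis by (auto simp: path_indep_def less_Suc_eq)
  next
    case True
    with J have "J - {Suc h} \<in> path_indep lo h"
      unfolding path_indep_def no_consec_def by (fastforce simp: subset_iff less_Suc_eq)
    moreover have "J = (J - {Suc h}) \<union> {Suc h}"
      using True by blast
    ultimately show ?thesis
      unfolding set_join_def by blast
  qed
next
  fix J assume "J \<in> path_indep lo (Suc h) \<union> set_join (path_indep lo h) {{Suc h}}"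
  then show "J \<in> path_indep lo (Suc (Suc h))"
    using assms by (auto simp: path_indep_def set_join_def no_consec_def)
qed

lemma size_poly_path_indep_add: "size_poly (path_indep lo (lo + m)) = fib_poly (m + 2)"
proof (induction m rule: fib_poly.induct)
  case 1
  then show ?case by (simp add: path_indep_empty)
next
  case 2
  have "path_indep lo (lo + 1) = {{}, {lo}}"
    by (auto simp: path_indep_def no_consec_def)
  then show ?case by (simp add: size_poly_def)
next
  case (3 k)
  have "size_poly (set_join (path_indep lo (lo + k)) {{Suc (lo + k)}}) =
      size_poly (path_indep lo (lo + k)) * monom 1 1"
    by (subst size_poly_set_join[where X = "{lo..<lo + k}" and Y = "{Suc (lo + k)}"])
      (auto simp: path_indep_def)
  moreover have "path_indep lo (Suc (lo + k)) \<inter> set_join (path_indep lo (lo + k)) {{Suc (lo + k)}} = {}"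
    by (auto simp: set_join_def path_indep_def)
  ultimately show ?case
    using 3 path_indep_Suc_Suc[of lo "lo + k"]
    by (simp add: size_poly_Un_disjoint finite_set_join numeral_2_eq_2 mult.commute)
qed

lemma size_poly_path_indep: "lo \<le> Suc hi \<Longrightarrow> size_poly (path_indep lo hi) = fib_poly (hi + 2 - lo)"
  using size_poly_path_indep_add[of lo "hi - lo"] path_indep_empty[of hi lo]
  by (cases "lo \<le> hi") (auto simp: numeral_2_eq_2 Suc_diff_le)

lemma size_poly_path_indep_pred: "lo \<le> a \<Longrightarrow> size_poly (path_indep lo (a - 1)) = fib_poly (a + 1 - lo)"
  by (cases a) (simp_all add: size_poly_path_indep numeral_2_eq_2)

lemma path_indep_split_at:
  assumes "lo \<le> u" "u < hi" "S \<subseteq> {Suc (Suc u)..<hi}"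
  shows "{J \<in> path_indep lo hi. u \<in> J \<and> S \<subseteq> J} =
    set_join (set_join (path_indep lo (u - 1)) {{u}}) {B \<in> path_indep (Suc (Suc u)) hi. S \<subseteq> B}"
proof (intro set_eqI iffI)
  fix J assume J: "J \<in> {J \<in> path_indep lo hi. u \<in> J \<and> S \<subseteq> J}"
  have "{k \<in> J. k < u} \<subseteq> {lo..<u - 1}"
  proof
    fix k assume k: "k \<in> {k \<in> J. k < u}"
    with J have "Suc k \<noteq> u"
      by (auto simp: path_indep_def no_consec_def)
    with k J show "k \<in> {lo..<u - 1}"
      by (auto simp: path_indep_def)
  qed
  with J have "{k \<in> J. k < u} \<in> path_indep lo (u - 1)"
    by (auto simp: path_indep_def no_consec_def)
  moreover have "{k \<in> J. u < k} \<subseteq> {Suc (Suc u)..<hi}"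
  proof
    fix k assume k: "k \<in> {k \<in> J. u < k}"
    with J have "k \<noteq> Suc u"
      by (auto simp: path_indep_def no_consec_def)
    with k J show "k \<in> {Suc (Suc u)..<hi}"
      by (auto simp: path_indep_def)
  qed
  with J assms(3) have "{k \<in> J. u < k} \<in> {B \<in> path_indep (Suc (Suc u)) hi. S \<subseteq> B}"
    by (auto simp: path_indep_def no_consec_def)
  ultimately have "({k \<in> J. k < u} \<union> {u}) \<union> {k \<in> J. u < k} \<in> set_join (set_join (path_indep lo (u - 1)) {{u}})
      {B \<in> path_indep (Suc (Suc u)) hi. S \<subseteq> B}"
    by (intro set_joinI) auto
  moreover have "({k \<in> J. k < u} \<union> {u}) \<union> {k \<in> J. u < k} = J"
    using J by auto
  ultimately show "J \<in> set_join (set_join (path_indep lo (u - 1)) {{u}})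
      {B \<in> path_indep (Suc (Suc u)) hi. S \<subseteq> B}"
    by simp
next
  fix J assume "J \<in> set_join (set_join (path_indep lo (u - 1)) {{u}})
      {B \<in> path_indep (Suc (Suc u)) hi. S \<subseteq> B}"
  then obtain A B where A: "A \<subseteq> {lo..<u - 1}" "no_consec A"
    and B: "B \<subseteq> {Suc (Suc u)..<hi}" "no_consec B" "S \<subseteq> B" and J: "J = A \<union> {u} \<union> B"
    by (auto simp: set_join_iff path_indep_def)
  have "J \<subseteq> {lo..<hi}"
    using A(1) B(1) assms(1,2) by (auto simp: J subset_iff)
  moreover have "no_consec J"
    using A B unfolding J no_consec_def by fastforce
  ultimately show "J \<in> {J \<in> path_indep lo hi. u \<in> J \<and> S \<subseteq> J}"
    using B(3) by (auto simp: J path_indep_def)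
qed

lemma size_poly_path_indep_split_at:
  assumes "lo \<le> u" "u < hi" "S \<subseteq> {Suc (Suc u)..<hi}"
  shows "size_poly {J \<in> path_indep lo hi. u \<in> J \<and> S \<subseteq> J} =
    size_poly (path_indep lo (u - 1)) * monom 1 1 * size_poly {B \<in> path_indep (Suc (Suc u)) hi. S \<subseteq> B}"
proof -
  have "size_poly (set_join (path_indep lo (u - 1)) {{u}}) = size_poly (path_indep lo (u - 1)) * monom 1 1"
    by (subst size_poly_set_join[where X = "{lo..<u - 1}" and Y = "{u}"]) (auto simp: path_indep_def)
  moreover have "size_poly (set_join (set_join (path_indep lo (u - 1)) {{u}})
      {B \<in> path_indep (Suc (Suc u)) hi. S \<subseteq> B}) =
    size_poly (set_join (path_indep lo (u - 1)) {{u}}) * size_poly {B \<in> path_indep (Suc (Suc u)) hi. S \<subseteq> B}"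
  proof (rule size_poly_set_join[where X = "{lo..<Suc u}" and Y = "{Suc (Suc u)..<hi}"])
    show "set_join (path_indep lo (u - 1)) {{u}} \<subseteq> Pow {lo..<Suc u}"
      using assms(1) by (fastforce simp: path_indep_def set_join_def)
  qed (auto simp: path_indep_def)
  ultimately show ?thesis
    by (simp add: path_indep_split_at[OF assms])
qed

lemma size_poly_path_indep_mem:
  assumes "lo \<le> a" "a < hi"
  shows "size_poly {J \<in> path_indep lo hi. a \<in> J} = fib_poly (a + 1 - lo) * monom 1 1 * fib_poly (hi - a)"
proof -
  have "size_poly (path_indep (Suc (Suc a)) hi) = fib_poly (hi - a)"
    using assms(2) by (simp add: size_poly_path_indep)
  then show ?thesis
    using size_poly_path_indep_split_at[OF assms, of "{}"] size_poly_path_indep_pred[OF assms(1)] by simp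
qed

lemma size_poly_path_indep_mem2:
  assumes "lo \<le> a" "a < b" "b < hi"
  shows "size_poly {J \<in> path_indep lo hi. a \<in> J \<and> b \<in> J} =
    fib_poly (a + 1 - lo) * monom 1 1 * fib_poly (b - a - 1) * monom 1 1 * fib_poly (hi - b)"
proof (cases "b = Suc a")
  case True
  have none: "{J \<in> path_indep lo hi. a \<in> J \<and> Suc a \<in> J} = {}"
    by (auto simp: path_indep_def no_consec_def)
  show ?thesis
    unfolding True none by simp
next
  case False
  have "size_poly {B \<in> path_indep (Suc (Suc a)) hi. b \<in> B} =
      fib_poly (b - a - 1) * monom 1 1 * fib_poly (hi - b)"
    using False assms by (subst size_poly_path_indep_mem) auto
  then show ?thesis
    using size_poly_path_indep_split_at[of lo a hi "{b}"] size_poly_path_indep_pred[OF assms(1)] False assms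
    by (simp add: mult.assoc)
qed

lemma nonneg_poly_fib_poly: "nonneg_poly (fib_poly n)"
  by (induction n rule: fib_poly.induct)
    (simp_all add: nonneg_poly_add nonneg_poly_mult nonneg_poly_monom, simp_all add: nonneg_poly_def coeff_1)

lemma fib_poly_dOcagne:
  "fib_poly a * fib_poly (a + e + 1) - fib_poly (a + 1) * fib_poly (a + e) =
    (-1) ^ (a + 1) * monom 1 a * fib_poly e"
proof (induction a)
  case 0
  then show ?case by (simp add: monom_0 one_pCons)
next
  case (Suc a)
  have "fib_poly (Suc a) * fib_poly (Suc a + e + 1) - fib_poly (Suc a + 1) * fib_poly (Suc a + e) =
      - (monom 1 1 * (fib_poly a * fib_poly (a + e + 1) - fib_poly (a + 1) * fib_poly (a + e)))"
    by (simp add: algebra_simps)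
  also have "\<dots> = - (monom 1 1 * ((-1) ^ (a + 1) * monom 1 a * fib_poly e))"
    by (simp only: Suc.IH)
  also have "\<dots> = (-1) ^ (Suc a + 1) * monom 1 (Suc a) * fib_poly e"
    by (simp add: mult_monom algebra_simps)
  finally show ?case .
qed

lemma fib_poly_dOcagne_2:
  "fib_poly m * fib_poly (m + d + 2) - fib_poly (m + 2) * fib_poly (m + d) =
    (-1) ^ (m + 1) * monom 1 m * fib_poly d"
proof (cases d)
  case 0
  then show ?thesis by (simp add: mult.commute)
next
  case (Suc d')
  have "fib_poly m * fib_poly (m + d + 2) - fib_poly (m + 2) * fib_poly (m + d) =
      (fib_poly m * fib_poly (m + (d' + 2) + 1) - fib_poly (m + 1) * fib_poly (m + (d' + 2))) +
      (fib_poly (m + 1) * fib_poly ((m + 1) + d' + 1) - fib_poly ((m + 1) + 1) * fib_poly ((m + 1) + d'))"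
    using Suc by (simp add: algebra_simps)
  also have "\<dots> = (-1) ^ (m + 1) * monom 1 m * (fib_poly (d' + 2) - monom 1 1 * fib_poly d')"
    unfolding fib_poly_dOcagne by (simp add: mult_monom algebra_simps)
  also have "fib_poly (d' + 2) - monom 1 1 * fib_poly d' = fib_poly d"
    using Suc by (simp add: numeral_2_eq_2)
  finally show ?thesis .
qed

lemma nonneg_poly_fib_poly_cross_diff:
  assumes "1 \<le> p" "1 \<le> q" "(odd p \<and> p \<le> q) \<or> (even q \<and> q \<le> p)"
  shows "nonneg_poly (fib_poly (p + 1) * fib_poly (q - 1) - fib_poly (p - 1) * fib_poly (q + 1))"
  using assms(3)
proof
  assume pq: "odd p \<and> p \<le> q"
  have "fib_poly (p - 1) * fib_poly (q + 1) - fib_poly (p + 1) * fib_poly (q - 1) =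
      (-1) ^ p * monom 1 (p - 1) * fib_poly (q - p)"
    using fib_poly_dOcagne_2[of "p - 1" "q - p"] pq assms(1) by simp
  with pq have "fib_poly (p + 1) * fib_poly (q - 1) - fib_poly (p - 1) * fib_poly (q + 1) =
      monom 1 (p - 1) * fib_poly (q - p)"
    by (simp add: algebra_simps)
  then show ?thesis
    by (simp add: nonneg_poly_mult nonneg_poly_monom nonneg_poly_fib_poly)
next
  assume qp: "even q \<and> q \<le> p"
  have "fib_poly (q - 1) * fib_poly (p + 1) - fib_poly (q + 1) * fib_poly (p - 1) =
      (-1) ^ q * monom 1 (q - 1) * fib_poly (p - q)"
    using fib_poly_dOcagne_2[of "q - 1" "p - q"] qp assms(2) by simp
  with qp have "fib_poly (p + 1) * fib_poly (q - 1) - fib_poly (p - 1) * fib_poly (q + 1) =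
      monom 1 (q - 1) * fib_poly (p - q)"
    by (simp add: algebra_simps)
  then show ?thesis
    by (simp add: nonneg_poly_mult nonneg_poly_monom nonneg_poly_fib_poly)
qed

section \<open>Independent sets through a cut vertex\<close>

lemma indep_set_Un_across_cut:
  assumes "P \<subseteq> V" "J \<subseteq> P" "K \<subseteq> V - P"
    and sep: "\<forall>a\<in>P - {v}. \<forall>w\<in>V - P. \<not> E a w \<and> \<not> E w a"
  shows "indep_set V E (J \<union> K) \<longleftrightarrow>
    indep_set P E J \<and> indep_set (V - P) E K \<and> (v \<in> J \<longrightarrow> (\<forall>w\<in>K. \<not> E v w \<and> \<not> E w v))"
proof
  assume "indep_set V E (J \<union> K)"
  then show "indep_set P E J \<and> indep_set (V - P) E K \<and> (v \<in> J \<longrightarrow> (\<forall>w\<in>K. \<not> E v w \<and> \<not> E w v))"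
    using assms(2,3) by (auto simp: indep_set_def)
next
  assume indep: "indep_set P E J \<and> indep_set (V - P) E K \<and> (v \<in> J \<longrightarrow> (\<forall>w\<in>K. \<not> E v w \<and> \<not> E w v))"
  have "\<not> E a b" if "a \<in> J" "b \<in> K" for a b
    using that indep sep assms(2,3) by (cases "a = v") auto
  moreover have "\<not> E b a" if "a \<in> J" "b \<in> K" for a b
    using that indep sep assms(2,3) by (cases "a = v") auto
  ultimately show "indep_set V E (J \<union> K)"
    using indep assms(1-3) by (auto simp: indep_set_def)
qed

lemma size_poly_star_cut_vertex:
  assumes "finite V" "P \<subseteq> V" "z \<in> P"
    and sep: "\<forall>a\<in>P - {v}. \<forall>w\<in>V - P. \<not> E a w \<and> \<not> E w a"
  shows "size_poly {I. indep_set V E I \<and> z \<in> I} =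
    size_poly {J. indep_set P E J \<and> z \<in> J} * size_poly {K. indep_set (V - P) E K}
    - size_poly {J. indep_set P E J \<and> z \<in> J \<and> v \<in> J} *
      size_poly {K. indep_set (V - P) E K \<and> (\<exists>w\<in>K. E v w \<or> E w v)}"
proof -
  define Jz where "Jz = {J. indep_set P E J \<and> z \<in> J}"
  define Jv where "Jv = {J. indep_set P E J \<and> z \<in> J \<and> v \<in> J}"
  define K where "K = {R. indep_set (V - P) E R}"
  define Kv where "Kv = {R. indep_set (V - P) E R \<and> (\<exists>w\<in>R. E v w \<or> E w v)}"
  have fam: "Jz \<subseteq> Pow P" "Jv \<subseteq> Jz" "K \<subseteq> Pow (V - P)" "Kv \<subseteq> K"
    by (auto simp: Jz_def Jv_def K_def Kv_def indep_set_def)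
  have Jv_Jz: "Jv = {J \<in> Jz. v \<in> J}"
    by (auto simp: Jz_def Jv_def)
  have fin: "finite P" "finite (V - P)"
    using assms(1,2) finite_subset by auto
  then have fin_fam: "finite Jz" "finite K"
    using fam by (auto intro: finite_subset)
  have star: "{I. indep_set V E I \<and> z \<in> I} = set_join Jv (K - Kv) \<union> set_join (Jz - Jv) K"
  proof (intro set_eqI iffI)
    fix I assume "I \<in> {I. indep_set V E I \<and> z \<in> I}"
    then have I: "indep_set V E I" "z \<in> I \<inter> P" and parts: "I \<inter> P \<subseteq> P" "I - P \<subseteq> V - P"
      using assms(3) by (auto simp: indep_set_def)
    with indep_set_Un_across_cut[OF assms(2) parts sep]
    have "I \<inter> P \<in> Jz" "I - P \<in> K" "v \<in> I \<inter> P \<Longrightarrow> I \<inter> P \<in> Jv \<and> I - P \<in> K - Kv"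
      by (auto simp: Int_Diff_Un Jz_def Jv_def K_def Kv_def)
    then have "(I \<inter> P) \<union> (I - P) \<in> set_join Jv (K - Kv) \<union> set_join (Jz - Jv) K"
      by (cases "v \<in> I \<inter> P") (auto simp: Jv_def intro: set_joinI)
    then show "I \<in> set_join Jv (K - Kv) \<union> set_join (Jz - Jv) K"
      by (simp add: Int_Diff_Un)
  next
    fix I assume "I \<in> set_join Jv (K - Kv) \<union> set_join (Jz - Jv) K"
    then obtain A B where "A \<in> Jz" "B \<in> K" "I = A \<union> B" "v \<in> A \<longrightarrow> B \<notin> Kv"
      using fam(2) by (auto simp: set_join_iff Jv_Jz)
    with indep_set_Un_across_cut[OF assms(2) _ _ sep, of A B]
    show "I \<in> {I. indep_set V E I \<and> z \<in> I}"
      by (auto simp: Jz_def K_def Kv_def indep_set_def)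
  qed
  have disj: "set_join Jv (K - Kv) \<inter> set_join (Jz - Jv) K = {}"
  proof -
    have "v \<in> I \<inter> P" if "I \<in> set_join Jv (K - Kv)" for I
      using that fam(1) by (auto simp: set_join_iff Jv_Jz)
    moreover have "v \<notin> I \<inter> P" if "I \<in> set_join (Jz - Jv) K" for I
      using that fam(3) by (auto simp: set_join_iff Jv_Jz)
    ultimately show ?thesis by blast
  qed
  have "size_poly {I. indep_set V E I \<and> z \<in> I} =
      size_poly (set_join Jv (K - Kv)) + size_poly (set_join (Jz - Jv) K)"
    unfolding star using fin_fam fam(2,4) disj
    by (intro size_poly_Un_disjoint finite_set_join) (auto intro: finite_subset)
  also have "\<dots> = size_poly Jv * (size_poly K - size_poly Kv) + (size_poly Jz - size_poly Jv) * size_poly K"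
  proof -
    have "Jv \<subseteq> Pow P" "Jz - Jv \<subseteq> Pow P" "K - Kv \<subseteq> Pow (V - P)"
      using fam by auto
    then show ?thesis
      using fam fin_fam by (simp add: size_poly_set_join[OF fin] size_poly_diff)
  qed
  finally show ?thesis
    unfolding Jz_def[symmetric] Jv_def[symmetric] K_def[symmetric] Kv_def[symmetric]
    by (simp add: algebra_simps)
qed

definition induced_path :: "('a \<Rightarrow> 'a \<Rightarrow> bool) \<Rightarrow> (nat \<Rightarrow> 'a) \<Rightarrow> nat \<Rightarrow> nat \<Rightarrow> bool" where
  "induced_path E e lo hi \<longleftrightarrow> inj_on e {lo..<hi} \<and>
     (\<forall>a\<in>{lo..<hi}. \<forall>b\<in>{lo..<hi}. E (e a) (e b) \<longleftrightarrow> b = Suc a \<or> a = Suc b)"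

lemma indep_set_induced_path_iff:
  assumes "induced_path E e lo hi"
  shows "{I. indep_set (e ` {lo..<hi}) E I} = image e ` path_indep lo hi"
proof (intro set_eqI iffI)
  fix I assume "I \<in> {I. indep_set (e ` {lo..<hi}) E I}"
  then have sub: "I \<subseteq> e ` {lo..<hi}" and indep: "\<forall>x\<in>I. \<forall>y\<in>I. \<not> E x y"
    by (auto simp: indep_set_def)
  define J where "J = {k \<in> {lo..<hi}. e k \<in> I}"
  have "no_consec J"
    unfolding no_consec_def
  proof
    fix k assume k: "k \<in> J"
    show "Suc k \<notin> J"
    proof
      assume "Suc k \<in> J"
      with k assms have "E (e k) (e (Suc k))"
        by (simp add: J_def induced_path_def)
      with k \<open>Suc k \<in> J\<close> indep show False
        by (simp add: J_def)
    qed
  qed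
  then have "J \<in> path_indep lo hi"
    by (auto simp: J_def path_indep_def)
  moreover have "I = e ` J"
    using sub by (auto simp: J_def)
  ultimately show "I \<in> image e ` path_indep lo hi"
    by blast
next
  fix I assume "I \<in> image e ` path_indep lo hi"
  then obtain J where J: "J \<subseteq> {lo..<hi}" "no_consec J" "I = e ` J"
    by (auto simp: path_indep_def)
  have "\<not> E (e a) (e b)" if "a \<in> J" "b \<in> J" for a b
  proof -
    have "b \<noteq> Suc a" "a \<noteq> Suc b"
      using J(2) that unfolding no_consec_def by auto
    with J(1) that assms show ?thesis
      by (auto simp: induced_path_def)
  qed
  with J show "I \<in> {I. indep_set (e ` {lo..<hi}) E I}"
    by (auto simp: indep_set_def)
qed

lemma size_poly_indep_induced_path:
  assumes "induced_path E e lo hi" "A \<subseteq> {lo..<hi}"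
  shows "size_poly {I. indep_set (e ` {lo..<hi}) E I \<and> e ` A \<subseteq> I} =
    size_poly {J \<in> path_indep lo hi. A \<subseteq> J}"
proof -
  have inj: "inj_on e {lo..<hi}"
    using assms(1) by (simp add: induced_path_def)
  have image_subset: "e ` A \<subseteq> e ` J \<longleftrightarrow> A \<subseteq> J" if "J \<subseteq> {lo..<hi}" for J
    using that assms(2) inj_on_image_mem_iff[OF inj] by (metis image_subset_iff subset_iff image_mono)
  have "{I. indep_set (e ` {lo..<hi}) E I \<and> e ` A \<subseteq> I} = {I \<in> {I. indep_set (e ` {lo..<hi}) E I}. e ` A \<subseteq> I}"
    by simp
  also have "\<dots> = {I \<in> image e ` path_indep lo hi. e ` A \<subseteq> I}"
    unfolding indep_set_induced_path_iff[OF assms(1)] ..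
  also have "\<dots> = image e ` {J \<in> path_indep lo hi. A \<subseteq> J}"
    using image_subset by (auto simp: path_indep_def)
  finally have "{I. indep_set (e ` {lo..<hi}) E I \<and> e ` A \<subseteq> I} = image e ` {J \<in> path_indep lo hi. A \<subseteq> J}" .
  then show ?thesis
    using inj by (simp add: size_poly_image[where X = "{lo..<hi}"] path_indep_def subset_iff)
qed

lemma nonneg_poly_star_diff_path_through_cut:
  assumes "finite V" and path: "induced_path E e 1 (n + 1)" and PV: "e ` {1..<n + 1} \<subseteq> V"
    and sep: "\<forall>a\<in>e ` {1..<n + 1} - {e (p + 1)}. \<forall>w\<in>V - e ` {1..<n + 1}. \<not> E a w \<and> \<not> E w a"
    and n: "n = p + q + 1" and p: "1 \<le> p" and q: "1 \<le> q" and pq: "(odd p \<and> p \<le> q) \<or> (even q \<and> q \<le> p)"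
  shows "nonneg_poly (size_poly {I. indep_set V E I \<and> e 1 \<in> I} - size_poly {I. indep_set V E I \<and> e n \<in> I})"
proof -
  define P where "P = e ` {1..<n + 1}"
  define K where "K = size_poly {R. indep_set (V - P) E R}"
  define Kv where "Kv = size_poly {R. indep_set (V - P) E R \<and> (\<exists>w\<in>R. E (e (p + 1)) w \<or> E w (e (p + 1)))}"
  have in_path: "{1, p + 1, n} \<subseteq> {1..<n + 1}"
    using n by auto
  have path_count: "size_poly {J. indep_set P E J \<and> e ` A \<subseteq> J} = size_poly {J \<in> path_indep 1 (n + 1). A \<subseteq> J}"
    if "A \<subseteq> {1, p + 1, n}" for A
    unfolding P_def using size_poly_indep_induced_path[OF path] that in_path by blast
  have "size_poly {J. indep_set P E J \<and> e 1 \<in> J} = monom 1 1 * fib_poly n"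
    using path_count[of "{1}"] size_poly_path_indep_mem[of 1 1 "n + 1"] n by simp
  moreover have "size_poly {J. indep_set P E J \<and> e n \<in> J} = monom 1 1 * fib_poly n"
    using path_count[of "{n}"] size_poly_path_indep_mem[of 1 n "n + 1"] n by simp
  moreover have "size_poly {J. indep_set P E J \<and> e 1 \<in> J \<and> e (p + 1) \<in> J} =
      monom 1 1 * monom 1 1 * fib_poly (p - 1) * fib_poly (q + 1)"
    using path_count[of "{1, p + 1}"] size_poly_path_indep_mem2[of 1 1 "p + 1" "n + 1"] n p
    by (simp add: algebra_simps)
  moreover have "size_poly {J. indep_set P E J \<and> e n \<in> J \<and> e (p + 1) \<in> J} =
      monom 1 1 * monom 1 1 * fib_poly (p + 1) * fib_poly (q - 1)"
    using path_count[of "{p + 1, n}"] size_poly_path_indep_mem2[of 1 "p + 1" n "n + 1"] n q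
    by (simp add: algebra_simps conj_commute)
  moreover have "e 1 \<in> P" "e n \<in> P"
    using in_path unfolding P_def by auto
  ultimately have diff: "size_poly {I. indep_set V E I \<and> e 1 \<in> I} - size_poly {I. indep_set V E I \<and> e n \<in> I} =
      monom 1 1 * monom 1 1 * (fib_poly (p + 1) * fib_poly (q - 1) - fib_poly (p - 1) * fib_poly (q + 1)) * Kv"
    using size_poly_star_cut_vertex[OF assms(1) PV _ sep, of "e 1"]
      size_poly_star_cut_vertex[OF assms(1) PV _ sep, of "e n"]
    unfolding P_def[symmetric] K_def[symmetric] Kv_def[symmetric] by (simp add: algebra_simps)
  show ?thesis
    unfolding diff Kv_def
    by (intro nonneg_poly_mult nonneg_poly_monom nonneg_poly_size_poly
        nonneg_poly_fib_poly_cross_diff p q pq zero_le_one)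
qed

section \<open>Spiders\<close>

text \<open>The path v_{i,p}, ..., v_{i,1}, v_0, v_{j,1}, v_{j,2}, ..., indexed from 1.\<close>

definition spider_path :: "nat \<Rightarrow> nat \<Rightarrow> nat \<Rightarrow> nat \<Rightarrow> nat \<times> nat" where
  "spider_path i j p k = (if k \<le> p then (i, p + 1 - k) else if k = p + 1 then (0, 0) else (j, k - (p + 1)))"

context
  fixes L :: "nat list" and i j p q n :: nat
  assumes ij: "1 \<le> i" "i < j" "j \<le> length L"
    and pq: "L ! (i - 1) = p" "L ! (j - 1) = q" "1 \<le> p" "1 \<le> q"
    and n: "n = p + q + 1"
begin

lemma spider_path_in_verts: "spider_path i j p ` {1..<n + 1} \<subseteq> spider_verts L"
proof
  fix v assume "v \<in> spider_path i j p ` {1..<n + 1}"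
  then obtain k where k: "1 \<le> k" "k \<le> p + q + 1" "v = spider_path i j p k"
    using n by auto
  then consider "k \<le> p" | "k = p + 1" | "p + 1 < k" "k - (p + 1) \<le> q"
    by linarith
  then show "v \<in> spider_verts L"
    by cases (use k ij pq in \<open>auto simp: spider_path_def spider_verts_def\<close>)
qed

lemma induced_path_spider_path: "induced_path (spider_adj L) (spider_path i j p) 1 (n + 1)"
  unfolding induced_path_def
proof
  show "inj_on (spider_path i j p) {1..<n + 1}"
    using ij by (auto simp: inj_on_def spider_path_def split: if_splits)
  show "\<forall>a\<in>{1..<n + 1}. \<forall>b\<in>{1..<n + 1}.
      spider_adj L (spider_path i j p a) (spider_path i j p b) \<longleftrightarrow> b = Suc a \<or> a = Suc b"
  proof (intro ballI)
    fix a b assume ab: "a \<in> {1..<n + 1}" "b \<in> {1..<n + 1}"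
    then have "spider_path i j p a \<in> spider_verts L" "spider_path i j p b \<in> spider_verts L"
      using spider_path_in_verts by auto
    then have "spider_adj L (spider_path i j p a) (spider_path i j p b) \<longleftrightarrow>
        (spider_path i j p a = (0, 0) \<and> 1 \<le> fst (spider_path i j p b) \<and> snd (spider_path i j p b) = 1) \<or>
        (spider_path i j p b = (0, 0) \<and> 1 \<le> fst (spider_path i j p a) \<and> snd (spider_path i j p a) = 1) \<or>
        (1 \<le> fst (spider_path i j p a) \<and> fst (spider_path i j p a) = fst (spider_path i j p b) \<and>
          (snd (spider_path i j p b) = snd (spider_path i j p a) + 1 \<or>
           snd (spider_path i j p a) = snd (spider_path i j p b) + 1))"
      by (simp add: spider_adj_def)
    also have "\<dots> \<longleftrightarrow> b = Suc a \<or> a = Suc b"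
      using ab ij pq(3,4) n by (auto simp: spider_path_def split: if_splits)
    finally show "spider_adj L (spider_path i j p a) (spider_path i j p b) \<longleftrightarrow> b = Suc a \<or> a = Suc b" .
  qed
qed

lemma spider_path_separates:
  "\<forall>a\<in>spider_path i j p ` {1..<n + 1} - {spider_path i j p (p + 1)}.
     \<forall>w\<in>spider_verts L - spider_path i j p ` {1..<n + 1}.
       \<not> spider_adj L a w \<and> \<not> spider_adj L w a"
proof (intro ballI)
  fix a w
  assume a: "a \<in> spider_path i j p ` {1..<n + 1} - {spider_path i j p (p + 1)}"
    and w: "w \<in> spider_verts L - spider_path i j p ` {1..<n + 1}"
  have "fst a = i \<or> fst a = j"
    using a by (auto simp: spider_path_def split: if_splits)
  moreover obtain l s where ls: "w = (l, s)"
    by fastforce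
  moreover have "w \<noteq> (0, 0)"
    using w n by (auto simp: image_iff spider_path_def intro!: bexI[of _ "p + 1"])
  moreover have "l \<noteq> i"
  proof
    assume "l = i"
    with w ls pq n have "w = spider_path i j p (p + 1 - s)"
      by (auto simp: spider_verts_def spider_path_def)
    moreover have "p + 1 - s \<in> {1..<n + 1}"
      using w ls \<open>l = i\<close> pq n by (auto simp: spider_verts_def)
    ultimately show False
      using w by auto
  qed
  moreover have "l \<noteq> j"
  proof
    assume "l = j"
    with w ls ij pq n have "w = spider_path i j p (p + 1 + s)"
      by (auto simp: spider_verts_def spider_path_def)
    moreover have "p + 1 + s \<in> {1..<n + 1}"
      using w ls \<open>l = j\<close> ij pq n by (auto simp: spider_verts_def)
    ultimately show False
      using w by auto
  qed
  moreover have "a \<noteq> (0, 0)"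
    using a by (auto simp: spider_path_def split: if_splits)
  ultimately show "\<not> spider_adj L a w \<and> \<not> spider_adj L w a"
    by (auto simp: spider_adj_def)
qed

end

lemma finite_spider_verts: "finite (spider_verts L)"
proof (rule finite_subset)
  show "spider_verts L \<subseteq> insert (0, 0) (SIGMA i:{1..length L}. {1..L ! (i - 1)})"
    by (auto simp: spider_verts_def)
qed auto

lemma spider_order_pair:
  assumes "spider_order L" "1 \<le> i" "i < j" "j \<le> length L"
  shows "(odd (L ! (i - 1)) \<and> L ! (i - 1) \<le> L ! (j - 1)) \<or> (even (L ! (j - 1)) \<and> L ! (j - 1) \<le> L ! (i - 1))"
proof -
  have "\<not> (odd (L ! (j - 1)) \<and> odd (L ! (i - 1)) \<and> L ! (j - 1) < L ! (i - 1))"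
    "\<not> (even (L ! (i - 1)) \<and> even (L ! (j - 1)) \<and> L ! (i - 1) < L ! (j - 1))"
    "\<not> (odd (L ! (j - 1)) \<and> even (L ! (i - 1)))"
    using assms unfolding spider_order_def by (fastforce dest: spec[of _ j] spec[of _ i])+
  then show ?thesis
    by auto
qed

lemma card_indep_star_le_if_nonneg_poly_diff:
  assumes "finite V"
    and "nonneg_poly (size_poly {I. indep_set V E I \<and> x \<in> I} - size_poly {I. indep_set V E I \<and> y \<in> I})"
  shows "card (indep_star V E t y) \<le> card (indep_star V E t x)"
proof -
  have fin: "finite {I. indep_set V E I \<and> z \<in> I}" for z
    using assms(1) by (auto simp: indep_set_def intro: finite_subset[of _ "Pow V"])
  have "indep_star V E t z = {I \<in> {I. indep_set V E I \<and> z \<in> I}. card I = t}" for z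
    by (auto simp: indep_star_def indep_sets_of_size_def)
  then show ?thesis
    using assms(2) fin unfolding nonneg_poly_def by (fastforce simp: coeff_size_poly)
qed

theorem theorem2p3:
  fixes L :: "nat list" and t i j :: nat
  assumes "length L \<ge> 1"
    and "\<forall>l \<in> set L. l > 0"
    and "spider_order L"
    and "1 \<le> t" and "t \<le> indep_number (spider_verts L) (spider_adj L)"
    and "1 \<le> i" and "i < j" and "j \<le> length L"
  shows "card (indep_star (spider_verts L) (spider_adj L) t (i, L!(i-1)))
         \<ge> card (indep_star (spider_verts L) (spider_adj L) t (j, L!(j-1)))"
proof -
  define p q where "p = L ! (i - 1)" and "q = L ! (j - 1)"
  have "p \<in> set L" "q \<in> set L"
    using assms(6-8) by (auto simp: p_def q_def)
  then have "1 \<le> p" "1 \<le> q"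
    using assms(2) by (auto simp: Suc_le_eq)
  note path_hyps = assms(6-8) p_def[symmetric] q_def[symmetric] this refl
  have "nonneg_poly (size_poly {I. indep_set (spider_verts L) (spider_adj L) I \<and> spider_path i j p 1 \<in> I}
      - size_poly {I. indep_set (spider_verts L) (spider_adj L) I \<and> spider_path i j p (p + q + 1) \<in> I})"
    using spider_order_pair[OF assms(3,6-8)] unfolding p_def[symmetric] q_def[symmetric]
    by (intro nonneg_poly_star_diff_path_through_cut[OF finite_spider_verts induced_path_spider_path[OF path_hyps]
        spider_path_in_verts[OF path_hyps] spider_path_separates[OF path_hyps] refl \<open>1 \<le> p\<close> \<open>1 \<le> q\<close>])
  moreover have "spider_path i j p 1 = (i, p)" "spider_path i j p (p + q + 1) = (j, q)"
    using \<open>1 \<le> p\<close> \<open>1 \<le> q\<close> by (simp_all add: spider_path_def)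
  ultimately show ?thesis
    unfolding p_def q_def by (simp add: card_indep_star_le_if_nonneg_poly_diff finite_spider_verts)
qed

end
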